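(* Let $\mathscr{U}$ be a bounded monomial polyhedron represented by $B\in M_n(\mathbb{Z})$ with $\det B>0$ and $B^{-1}\succeq0$, and let $A=\operatorname{adj}B$. Let $\beta\in(\mathbb{Z}^n)^\dagger$ and $p>0$. Then $\int_{\mathscr{U}}|z^\beta|^p\,dV(z)<\infty$ if and only if $(p\beta+2\cdot\mathbb{1})A\succ0$ (all entries strictly positive).
   Context: A monomial polyhedron defined by $B$ with rows $b^j$ is $\{z\in\mathbb{C}^n:\prod_k|z_k|^{b^j_k}<1\ \forall j\}$, excluding points where a product is undefined due to division by zero. $(\mathbb{Z}^n)^\dagger$ denotes integer row vectors; $z^\beta=\prod_jz_j^{\beta_j}$; $\mathbb{1}=(1,\dots,1)$ row vector; $\succ$ is entrywise strict inequality. *)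

theory Defs
  imports "HOL-Analysis.Analysis"
begin

text \<open>Adjugate (classical adjoint) of a square matrix: entry (i,j) is the (j,i) cofactor,
  i.e. the determinant of the matrix obtained from B by replacing row j with the
  i-th standard unit row vector.\<close>
definition adjugate :: "'a::comm_ring_1^'n^'n \<Rightarrow> 'a^'n^'n" where
  "adjugate B = (\<chi> i j. det (\<chi> k. if k = j then axis i 1 else B $ k))"

text \<open>Monomial polyhedron defined by the integer matrix B with rows b^j:
  all z in C^n with prod_k |z_k|^(b^j_k) < 1 for all j, excluding points where
  some product is undefined (a zero coordinate raised to a negative power).\<close>
definition monomial_polyhedron :: "int^'n^'n \<Rightarrow> (complex^'n) set" where
  "monomial_polyhedron B =
     {z. (\<forall>j k. B $ j $ k < 0 \<longrightarrow> z $ k \<noteq> 0) \<and>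
         (\<forall>j. (\<Prod>k\<in>UNIV. norm (z $ k) powi (B $ j $ k)) < 1)}"

definition monomial :: "int^'n \<Rightarrow> complex^'n \<Rightarrow> complex" where
  "monomial \<beta> z = (\<Prod>k\<in>UNIV. (z $ k) powi (\<beta> $ k))"

end

theory Submission
  imports Defs "HOL-Real_Asymp.Real_Asymp"
begin

text \<open>
  Almost every \<open>z\<close> has no zero coordinate, and \<open>x\<^sub>k = ln \<bar>z\<^sub>k\<bar>\<close> pushes Lebesgue measure on
  \<open>\<complex>\<^sup>n\<close> forward to the measure on \<open>\<real>\<^sup>n\<close> with density \<open>\<Prod>\<^sub>k 2 pi exp (2 x\<^sub>k)\<close>, because the annulus
  \<open>exp a < \<bar>w\<bar> < exp b\<close> has area \<open>pi (exp (2 b) - exp (2 a))\<close>. The polyhedron becomes the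
  simplicial cone \<open>{x. B x < 0}\<close> and \<open>\<bar>z\<^sup>\<beta>\<bar>\<^sup>p\<close> becomes \<open>exp (p \<beta> \<bullet> x)\<close>, so the integral is
  \<open>(2 pi)\<^sup>n\<close> times the integral of \<open>exp (c \<bullet> x)\<close> over that cone, where \<open>c = p \<beta> + 2 \<one>\<close>.
  In the coordinates \<open>y = B x\<close> the exponent is \<open>(c B\<^sup>-\<^sup>1) \<bullet> y\<close> on the negative orthant. If all
  coefficients of \<open>c B\<^sup>-\<^sup>1\<close> are positive, the integrand decays like \<open>exp (- \<epsilon> \<Sum>\<^sub>k \<bar>x\<^sub>k\<bar>)\<close>; if one
  is \<open>\<le> 0\<close>, infinitely many disjoint balls of equal radius along the corresponding edge of the
  cone carry a uniform positive lower bound. Since \<open>adj B = det B \<cdot> B\<^sup>-\<^sup>1\<close> with \<open>det B > 0\<close>, the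
  coefficients of \<open>c B\<^sup>-\<^sup>1\<close> and \<open>c adj B\<close> have the same signs.
\<close>

subsection \<open>Lebesgue measure on vectors as a product measure\<close>

lemma borel_measurable_vec_lambda:
  fixes f :: "'b \<Rightarrow> 'n::finite \<Rightarrow> 'a::euclidean_space"
  assumes [measurable]: "\<And>i. (\<lambda>x. f x i) \<in> borel_measurable M"
  shows "(\<lambda>x. \<chi> i. f x i) \<in> borel_measurable M"
proof (subst borel_measurable_euclidean_space, intro ballI)
  fix b :: "'a^'n" assume "b \<in> Basis"
  then obtain i u where "b = axis i u" unfolding Basis_vec_def by auto
  moreover have "(\<lambda>x. f x i \<bullet> u) \<in> borel_measurable M" by measurable
  ultimately show "(\<lambda>x. (\<chi> i. f x i) \<bullet> b) \<in> borel_measurable M"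
    by (simp add: inner_axis)
qed

lemma measurable_vec_nth_borel [measurable]:
  "(\<lambda>x::'a::euclidean_space^'n. x $ i) \<in> borel_measurable borel"
  by (intro borel_measurable_continuous_onI continuous_intros)

lemma measurable_vec_lambda_PiM_lborel:
  "(\<lambda>f. \<chi> i. f i) \<in> measurable (PiM UNIV (\<lambda>_::'n::finite. lborel)) (borel :: ('a::euclidean_space^'n) measure)"
  by (rule borel_measurable_vec_lambda) measurable

lemma prod_Basis_real_vec:
  "(\<Prod>b\<in>(Basis :: (real^'n) set). f b) = (\<Prod>k\<in>UNIV. f (axis k 1))"
  by (simp add: Basis_vec_def UNION_singleton_eq_range prod.reindex axis_eq_axis inj_on_def)

lemma lborel_vec_eq_distr_PiM:
  "(lborel :: ('a::euclidean_space^'n) measure) = distr (PiM UNIV (\<lambda>_. lborel)) borel (\<lambda>f. \<chi> i. f i)"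
proof (rule lborel_eqI)
  interpret finite_product_sigma_finite "\<lambda>_::'n. (lborel::'a measure)" UNIV by standard auto
  fix l u :: "'a^'n" assume lu: "\<And>b. b \<in> Basis \<Longrightarrow> l \<bullet> b \<le> u \<bullet> b"
  have lu_comp: "\<And>b. b \<in> Basis \<Longrightarrow> l$i \<bullet> b \<le> u$i \<bullet> b" for i
    using lu by (metis inner_axis axis_in_Basis_iff)
  have "(\<lambda>f. \<chi> i. f i) -` box l u \<inter> space (PiM UNIV (\<lambda>_::'n. lborel)) = (\<Pi>\<^sub>E i\<in>UNIV. box (l$i) (u$i))"
    by (auto simp: mem_box Basis_vec_def inner_axis space_PiM PiE_def Pi_iff)
  then have "emeasure (distr (PiM UNIV (\<lambda>_. lborel)) borel (\<lambda>f. \<chi> i. f i)) (box l u)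
      = emeasure (PiM UNIV (\<lambda>_::'n. lborel)) (\<Pi>\<^sub>E i\<in>UNIV. box (l$i) (u$i))"
    using measurable_vec_lambda_PiM_lborel by (subst emeasure_distr) auto
  also have "\<dots> = (\<Prod>i\<in>UNIV. emeasure lborel (box (l$i) (u$i)))"
    by (rule emeasure_PiM) auto
  also have "\<dots> = (\<Prod>i\<in>UNIV. ennreal (\<Prod>b\<in>Basis. (u$i - l$i) \<bullet> b))"
    using lu_comp by (subst emeasure_lborel_box_eq) (auto simp: box_eq_empty inner_diff_left not_less)
  also have "\<dots> = ennreal (\<Prod>i\<in>UNIV. \<Prod>b\<in>Basis. (u$i - l$i) \<bullet> b)"
    using lu_comp by (intro prod_ennreal) (auto intro!: prod_nonneg simp: inner_diff_left)
  also have "(\<Prod>i\<in>UNIV. \<Prod>b\<in>Basis. (u$i - l$i) \<bullet> b) = (\<Prod>b\<in>Basis. (u - l) \<bullet> b)"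
  proof -
    have "(\<Prod>b\<in>Basis. (u - l) \<bullet> b) = (\<Prod>i\<in>UNIV. \<Prod>b\<in>(\<lambda>v. axis i v) ` Basis. (u - l) \<bullet> b)"
      unfolding Basis_vec_def
      by (subst prod.UNION_disjoint) (auto simp: axis_eq_axis UNION_singleton_eq_range)
    also have "\<dots> = (\<Prod>i\<in>UNIV. \<Prod>b\<in>Basis. (u$i - l$i) \<bullet> b)"
      by (subst prod.reindex) (auto intro!: inj_onI simp: axis_eq_axis inner_axis)
    finally show ?thesis by simp
  qed
  finally show "emeasure (distr (PiM UNIV (\<lambda>_. lborel)) borel (\<lambda>f. \<chi> i. f i)) (box l u)
      = (\<Prod>b\<in>Basis. (u - l) \<bullet> b)" .
qed simp

lemma emeasure_lborel_vec_prod: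
  fixes S :: "'n::finite \<Rightarrow> 'a::euclidean_space set"
  assumes [measurable]: "\<And>i. S i \<in> sets borel"
  shows "emeasure lborel {z::'a^'n. \<forall>i. z$i \<in> S i} = (\<Prod>i\<in>UNIV. emeasure lborel (S i))"
proof -
  interpret finite_product_sigma_finite "\<lambda>_::'n. (lborel::'a measure)" UNIV by standard auto
  have "{z::'a^'n. \<forall>i. z$i \<in> S i} \<in> sets borel" by measurable
  moreover have "(\<lambda>f. \<chi> i. f i) -` {z::'a^'n. \<forall>i. z$i \<in> S i} \<inter> space (PiM UNIV (\<lambda>_::'n. lborel))
      = (\<Pi>\<^sub>E i\<in>UNIV. S i)"
    by (auto simp: space_PiM PiE_def Pi_iff)
  ultimately show ?thesis
    by (subst lborel_vec_eq_distr_PiM)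
       (simp add: emeasure_distr[OF measurable_vec_lambda_PiM_lborel] emeasure_PiM)
qed

lemma AE_lborel_vec_nth_neq:
  "AE z in (lborel :: ('a::euclidean_space^'n) measure). \<forall>k. z$k \<noteq> c k"
proof -
  have "AE z in (lborel :: ('a^'n) measure). z$k \<noteq> c k" for k
  proof (rule AE_I')
    let ?S = "\<lambda>i. if i = k then {c k} else UNIV"
    have "emeasure lborel {z::'a^'n. \<forall>i. z$i \<in> ?S i} = (\<Prod>i\<in>UNIV. emeasure lborel (?S i))"
      by (rule emeasure_lborel_vec_prod) auto
    also have "\<dots> = 0" by (rule prod_zero) auto
    finally show "{z::'a^'n. \<forall>i. z$i \<in> ?S i} \<in> null_sets lborel"
      by (auto simp: null_sets_def)
  qed auto
  then show ?thesis by (auto intro: AE_finite_allI[where S=UNIV, simplified])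
qed

subsection \<open>The logarithmic modulus\<close>

lemma emeasure_lborel_ln_norm_between:
  fixes a b :: real
  shows "emeasure lborel {w::complex. a < ln (norm w) \<and> ln (norm w) < b}
    = ennreal (pi * (exp (2*b) - exp (2*a)))"
proof -
  let ?S = "{w::complex. a < ln (norm w) \<and> ln (norm w) < b}"
  have ln_bounds: "c < ln x \<longleftrightarrow> exp c < x" "ln x < c \<longleftrightarrow> x < exp c" if "x > 0" for c x :: real
    using that by (metis exp_gt_zero ln_exp ln_less_cancel_iff)+
  \<comment> \<open>Since \<open>ln 0 = 0\<close>, the origin may lie in \<open>?S\<close>; it is a null set.\<close>
  have "?S - {0} = ball 0 (exp b) - cball 0 (exp a)"
    by (auto simp: ln_bounds not_le) (use exp_gt_zero less_trans ln_bounds in metis)+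
  moreover have "?S \<in> sets lborel" by measurable
  ultimately have "emeasure lborel ?S = emeasure lborel (ball (0::complex) (exp b) - cball 0 (exp a))"
    using emeasure_Diff_null_set[of "{0}" lborel ?S] by (simp add: countable_imp_null_set_lborel)
  also have "\<dots> = ennreal (pi * (exp (2*b) - exp (2*a)))"
  proof (cases "a < b")
    case True
    then have "cball (0::complex) (exp a) \<subseteq> ball 0 (exp b)"
      by (auto intro: order.strict_trans1)
    then have "emeasure lborel (ball (0::complex) (exp b) - cball 0 (exp a))
        = ennreal (pi * exp b ^ 2) - ennreal (pi * exp a ^ 2)"
      by (subst emeasure_Diff) (auto simp: emeasure_cball emeasure_ball eval_unit_ball_vol)
    also have "\<dots> = ennreal (pi * exp b ^ 2 - pi * exp a ^ 2)"
      by (rule ennreal_minus) simp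
    finally show ?thesis by (simp add: exp_double[symmetric] right_diff_distrib)
  next
    case False
    then have "ball (0::complex) (exp b) - cball 0 (exp a) = {}"
      by (auto simp: not_less) (meson exp_le_cancel_iff less_imp_le order_trans)
    moreover have "pi * (exp (2*b) - exp (2*a)) \<le> 0"
      using False by (simp add: mult_nonneg_nonpos)
    ultimately show ?thesis by (metis emeasure_empty ennreal_eq_0_iff)
  qed
  finally show ?thesis .
qed

lemma nn_integral_2pi_exp_Ioo:
  fixes a b :: real
  shows "(\<integral>\<^sup>+ t. ennreal (2*pi*exp(2*t)) * indicator {a<..<b} t \<partial>lborel)
    = ennreal (pi * (exp (2*b) - exp (2*a)))"
proof (cases "a < b")
  case True
  have "(\<integral>\<^sup>+ t. ennreal (2*pi*exp(2*t)) * indicator {a<..<b} t \<partial>lborel)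
      = (\<integral>\<^sup>+ t. ennreal (2*pi*exp(2*t)) * indicator {a..b} t \<partial>lborel)"
    by (rule nn_integral_cong_AE)
       (use AE_lborel_singleton[of a] AE_lborel_singleton[of b] in \<open>auto split: split_indicator\<close>)
  also have "\<dots> = ennreal (pi * exp (2*b) - pi * exp (2*a))"
    by (rule nn_integral_FTC_Icc[where F="\<lambda>t. pi * exp (2*t)"])
       (use True in \<open>auto intro!: derivative_eq_intros\<close>)
  finally show ?thesis by (simp add: algebra_simps)
next
  case False
  then have "{a<..<b} = {}" by auto
  moreover have "pi * (exp (2*b) - exp (2*a)) \<le> 0" using False by (simp add: mult_nonneg_nonpos)
  ultimately show ?thesis by (simp add: ennreal_eq_0_iff)
qed

definition log_modulus :: "complex^'n \<Rightarrow> real^'n" where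
  "log_modulus z = (\<chi> k. ln (norm (z$k)))"

definition log_modulus_density :: "real^'n \<Rightarrow> ennreal" where
  "log_modulus_density x = (\<Prod>k\<in>UNIV. ennreal (2*pi*exp(2*x$k)))"

lemma log_modulus_measurable [measurable]: "log_modulus \<in> borel_measurable borel"
  unfolding log_modulus_def by (rule borel_measurable_vec_lambda) measurable

lemma log_modulus_density_measurable [measurable]: "log_modulus_density \<in> borel_measurable borel"
  unfolding log_modulus_density_def by measurable

lemma log_modulus_density_eq:
  "log_modulus_density x = ennreal ((2*pi)^CARD('n) * exp (\<Sum>k\<in>UNIV. 2 * x$k))"
  for x :: "real^'n"
  unfolding log_modulus_density_def
  by (subst prod_ennreal) (auto simp: prod.distrib exp_sum)

lemma emeasure_density_log_modulus_box:
  fixes l u :: "real^'n"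
  shows "emeasure (density lborel log_modulus_density) (box l u)
    = (\<Prod>k\<in>UNIV. ennreal (pi * (exp (2*(u$k)) - exp (2*(l$k)))))"
proof -
  let ?f = "\<lambda>(b::real^'n) t. ennreal (2*pi*exp(2*t)) * indicator {l\<bullet>b<..<u\<bullet>b} t"
  have "emeasure (density lborel log_modulus_density) (box l u)
      = (\<integral>\<^sup>+ x. log_modulus_density x * indicator (box l u) x \<partial>lborel)"
    by (subst emeasure_density) auto
  also have "\<dots> = (\<integral>\<^sup>+ x. (\<Prod>b\<in>Basis. ?f b (x \<bullet> b)) \<partial>lborel)"
  proof (rule nn_integral_cong)
    fix x :: "real^'n"
    have "(\<Prod>k\<in>UNIV. indicator {l$k<..<u$k} (x$k) :: ennreal) = indicator (box l u) x"
      by (auto simp: mem_box_cart indicator_def)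
    then show "log_modulus_density x * indicator (box l u) x = (\<Prod>b\<in>Basis. ?f b (x \<bullet> b))"
      by (simp add: prod_Basis_real_vec inner_axis log_modulus_density_def prod.distrib)
  qed
  also have "\<dots> = (\<Prod>b\<in>Basis. (\<integral>\<^sup>+ t. ?f b t \<partial>lborel))"
    by (rule nn_integral_lborel_prod) auto
  also have "\<dots> = (\<Prod>k\<in>UNIV. ennreal (pi * (exp (2*(u$k)) - exp (2*(l$k)))))"
    by (simp add: nn_integral_2pi_exp_Ioo prod_Basis_real_vec inner_axis)
  finally show ?thesis .
qed

lemma distr_log_modulus:
  "distr (lborel :: (complex^'n) measure) borel log_modulus = density lborel log_modulus_density"
proof (rule measure_eqI_generator_eq)
  let ?E = "range (\<lambda>(a, b). box a b::(real^'n) set)"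
  show "Int_stable ?E"
    by (auto simp: Int_stable_def box_Int_box)
  show "?E \<subseteq> Pow UNIV" "sets (distr (lborel :: (complex^'n) measure) borel log_modulus) = sigma_sets UNIV ?E"
     "sets (density lborel log_modulus_density) = sigma_sets UNIV ?E"
    by (simp_all add: borel_eq_box)
  have box: "emeasure (distr (lborel :: (complex^'n) measure) borel log_modulus) (box l u)
      = (\<Prod>k\<in>UNIV. ennreal (pi * (exp (2*(u$k)) - exp (2*(l$k)))))" for l u :: "real^'n"
  proof -
    have "log_modulus -` box l u \<inter> space lborel
        = {z. \<forall>k. z$k \<in> {w. l$k < ln (norm w) \<and> ln (norm w) < u$k}}"
      by (auto simp: log_modulus_def mem_box_cart)
    moreover have "emeasure lborel {z::complex^'n. \<forall>k. z$k \<in> {w. l$k < ln (norm w) \<and> ln (norm w) < u$k}}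
       = (\<Prod>k\<in>UNIV. emeasure lborel {w::complex. l$k < ln (norm w) \<and> ln (norm w) < u$k})"
      by (rule emeasure_lborel_vec_prod) measurable
    ultimately show ?thesis
      by (simp add: emeasure_distr emeasure_lborel_ln_norm_between del: mem_Collect_eq)
  qed
  show "emeasure (distr lborel borel log_modulus) X = emeasure (density lborel log_modulus_density) X"
    if "X \<in> ?E" for X
    using that by (auto simp: box emeasure_density_log_modulus_box)
  let ?A = "\<lambda>n::nat. box (- (real n *\<^sub>R One)) (real n *\<^sub>R One) :: (real^'n) set"
  show "range ?A \<subseteq> ?E" "(\<Union>i. ?A i) = UNIV"
    unfolding UN_box_eq_UNIV by auto
  show "emeasure (distr lborel borel log_modulus) (?A i) \<noteq> \<infinity>" for i
    by (simp add: box ennreal_prod_eq_top)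
qed

subsection \<open>Exponentials integrated over simplicial cones\<close>

lemma nn_integral_exp_neg_atLeast_0:
  fixes e :: real
  assumes e: "e > 0"
  shows "(\<integral>\<^sup>+ t. ennreal (exp (-e*t)) * indicator {0..} t \<partial>lborel) = ennreal (1/e)"
proof -
  have "((\<lambda>t. - exp (- e * t) / e) \<longlongrightarrow> 0) at_top"
    using e by real_asymp
  then have "(\<integral>\<^sup>+ t. ennreal (exp (-e*t)) * indicator {0..} t \<partial>lborel) = ennreal (0 - (- exp (-e*0) / e))"
    using e by (intro nn_integral_FTC_atLeast[where F="\<lambda>t. - exp (-e*t) / e"])
      (auto intro!: derivative_eq_intros simp: field_simps)
  then show ?thesis by simp
qed

lemma nn_integral_exp_neg_abs_finite:
  fixes e :: real
  assumes e: "e > 0"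
  shows "(\<integral>\<^sup>+ t. ennreal (exp (-e*\<bar>t\<bar>)) \<partial>lborel) < \<infinity>"
proof -
  let ?h = "\<lambda>t. ennreal (exp (-e*t)) * indicator {0..} t"
  have "(\<integral>\<^sup>+ t. ennreal (exp (-e*\<bar>t\<bar>)) \<partial>lborel) \<le> (\<integral>\<^sup>+ t. ?h t + ?h (-t) \<partial>lborel)"
    by (intro nn_integral_mono) (auto split: split_indicator)
  also have "\<dots> = (\<integral>\<^sup>+ t. ?h t \<partial>lborel) + (\<integral>\<^sup>+ t. ?h (-t) \<partial>lborel)"
    by (rule nn_integral_add) auto
  also have "(\<integral>\<^sup>+ t. ?h (-t) \<partial>lborel) = (\<integral>\<^sup>+ t. ?h t \<partial>lborel)"
    using nn_integral_real_affine[of ?h "-1" 0] by simp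
  also have "(\<integral>\<^sup>+ t. ?h t \<partial>lborel) = ennreal (1/e)"
    by (rule nn_integral_exp_neg_atLeast_0[OF e])
  finally show ?thesis
    by (rule order.strict_trans1) simp
qed

lemma nn_integral_exp_neg_l1_norm_finite:
  fixes e :: real
  assumes e: "e > 0"
  shows "(\<integral>\<^sup>+ x. ennreal (exp (-e * (\<Sum>k\<in>UNIV. \<bar>x$k\<bar>))) \<partial>(lborel::(real^'n) measure)) < \<infinity>"
proof -
  have "(\<integral>\<^sup>+ x. ennreal (exp (-e * (\<Sum>k\<in>UNIV. \<bar>x$k\<bar>))) \<partial>(lborel::(real^'n) measure))
      = (\<integral>\<^sup>+ x. (\<Prod>b\<in>Basis. ennreal (exp (-e * \<bar>x \<bullet> b\<bar>))) \<partial>(lborel::(real^'n) measure))"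
    by (intro nn_integral_cong)
       (simp add: prod_Basis_real_vec inner_axis prod_ennreal exp_sum[symmetric] sum_distrib_left)
  also have "\<dots> = (\<Prod>b\<in>(Basis::(real^'n) set). (\<integral>\<^sup>+ t. ennreal (exp (-e * \<bar>t\<bar>)) \<partial>lborel))"
    by (rule nn_integral_lborel_prod) auto
  also have "\<dots> < \<infinity>"
    using nn_integral_exp_neg_abs_finite[OF e]
    by (simp add: less_top[symmetric] ennreal_prod_eq_top power_eq_top_ennreal)
  finally show ?thesis .
qed

lemma matrix_inv_left:
  fixes A :: "'a::semiring_1^'n^'n"
  assumes "invertible A"
  shows "matrix_inv A ** A = mat 1"
  using someI_ex[OF assms[unfolded invertible_def]] unfolding matrix_inv_def by blast

lemma matrix_inv_right:
  fixes A :: "'a::semiring_1^'n^'n"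
  assumes "invertible A"
  shows "A ** matrix_inv A = mat 1"
  using someI_ex[OF assms[unfolded invertible_def]] unfolding matrix_inv_def by blast

lemma inner_eq_inner_vector_matrix_mult:
  fixes A M :: "real^'n^'n" and c x :: "real^'n"
  assumes "M ** A = mat 1"
  shows "c \<bullet> x = (c v* M) \<bullet> (A *v x)"
  by (simp add: dot_lmul_matrix matrix_vector_mul_assoc assms)

definition negative_cone :: "real^'n^'m \<Rightarrow> (real^'n) set" where
  "negative_cone A = {x. \<forall>j. (A *v x)$j < 0}"

lemma open_negative_cone: "open (negative_cone A)"
proof -
  have "negative_cone A = (\<Inter>j. {x. (A *v x)$j < 0})"
    by (auto simp: negative_cone_def)
  then show ?thesis
    by (auto intro!: open_INT open_Collect_less continuous_intros)
qed

lemma negative_cone_measurable [measurable]: "negative_cone A \<in> sets borel"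
  by (simp add: open_negative_cone)

lemma sum_abs_matrix_vector_mult_le:
  fixes M :: "real^'n^'m" and y :: "real^'n"
  shows "(\<Sum>k\<in>UNIV. \<bar>(M *v y)$k\<bar>) \<le> (\<Sum>k\<in>UNIV. \<Sum>j\<in>UNIV. \<bar>M$k$j\<bar>) * (\<Sum>j\<in>UNIV. \<bar>y$j\<bar>)"
proof -
  have "\<bar>(M *v y)$k\<bar> \<le> (\<Sum>j\<in>UNIV. \<bar>M$k$j\<bar> * \<bar>y$j\<bar>)" for k
    using sum_abs[of "\<lambda>j. M$k$j * y$j" UNIV] by (simp add: matrix_vector_mult_def abs_mult)
  then have "(\<Sum>k\<in>UNIV. \<bar>(M *v y)$k\<bar>) \<le> (\<Sum>k\<in>UNIV. \<Sum>j\<in>UNIV. \<bar>M$k$j\<bar> * \<bar>y$j\<bar>)"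
    by (rule sum_mono)
  also have "\<dots> \<le> (\<Sum>k\<in>UNIV. \<Sum>j\<in>UNIV. \<bar>M$k$j\<bar> * (\<Sum>j\<in>UNIV. \<bar>y$j\<bar>))"
    by (intro sum_mono mult_left_mono member_le_sum) auto
  finally show ?thesis by (simp add: sum_distrib_right)
qed

lemma inner_le_neg_l1_norm_on_negative_cone:
  fixes A :: "real^'n^'n" and c :: "real^'n"
  assumes "invertible A" and pos: "\<forall>j. (c v* matrix_inv A)$j > 0"
  obtains \<epsilon> where "\<epsilon> > 0" "\<And>x. x \<in> negative_cone A \<Longrightarrow> c \<bullet> x \<le> - \<epsilon> * (\<Sum>k\<in>UNIV. \<bar>x$k\<bar>)"
proof -
  define M where "M = matrix_inv A"
  define d where "d = c v* M"
  define \<delta> where "\<delta> = Min (range (\<lambda>j. d$j))"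
  define C where "C = (\<Sum>k\<in>UNIV. \<Sum>j\<in>UNIV. \<bar>M$k$j\<bar>) + 1"
  have \<delta>_pos: "\<delta> > 0" using pos unfolding \<delta>_def d_def M_def by (subst Min_gr_iff) auto
  have \<delta>_le: "\<delta> \<le> d$j" for j unfolding \<delta>_def by (rule Min_le) auto
  have C_pos: "C > 0" unfolding C_def by (auto intro!: sum_nonneg add_nonneg_pos)
  show thesis
  proof (rule that[of "\<delta> / C"])
    show "\<delta> / C > 0" using \<delta>_pos C_pos by simp
    fix x assume "x \<in> negative_cone A"
    define y where "y = A *v x"
    define S where "S = (\<Sum>j\<in>UNIV. \<bar>y$j\<bar>)"
    have y_neg: "y$j < 0" for j using \<open>x \<in> negative_cone A\<close> by (simp add: negative_cone_def y_def)
    have "c \<bullet> x = (\<Sum>j\<in>UNIV. d$j * y$j)"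
      unfolding d_def y_def M_def
      by (subst inner_eq_inner_vector_matrix_mult[OF matrix_inv_left[OF \<open>invertible A\<close>]])
         (simp add: inner_vec_def)
    also have "\<dots> \<le> (\<Sum>j\<in>UNIV. \<delta> * y$j)"
      using y_neg \<delta>_le by (intro sum_mono mult_right_mono_neg) (auto intro: less_imp_le)
    also have "\<dots> = - \<delta> * S" unfolding S_def using y_neg by (simp add: sum_distrib_left abs_of_neg)
    finally have upper: "c \<bullet> x \<le> - \<delta> * S" .
    have "x = M *v y"
      unfolding y_def M_def by (simp add: matrix_vector_mul_assoc matrix_inv_left[OF \<open>invertible A\<close>])
    then have "(\<Sum>k\<in>UNIV. \<bar>x$k\<bar>) \<le> (\<Sum>k\<in>UNIV. \<Sum>j\<in>UNIV. \<bar>M$k$j\<bar>) * S"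
      unfolding S_def by (simp add: sum_abs_matrix_vector_mult_le)
    also have "\<dots> \<le> C * S"
      unfolding C_def S_def by (simp add: distrib_right sum_nonneg)
    finally have "(\<delta> / C) * (\<Sum>k\<in>UNIV. \<bar>x$k\<bar>) \<le> (\<delta> / C) * (C * S)"
      using \<delta>_pos C_pos by (intro mult_left_mono) auto
    with upper C_pos show "c \<bullet> x \<le> - (\<delta> / C) * (\<Sum>k\<in>UNIV. \<bar>x$k\<bar>)" by simp
  qed
qed

lemma nn_integral_exp_inner_negative_cone_finite:
  fixes A :: "real^'n^'n" and c :: "real^'n"
  assumes "invertible A" and "\<forall>j. (c v* matrix_inv A)$j > 0"
  shows "(\<integral>\<^sup>+ x. ennreal (exp (c \<bullet> x)) * indicator (negative_cone A) x \<partial>lborel) < \<infinity>"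
proof -
  obtain \<epsilon> where "\<epsilon> > 0" and bound: "\<And>x. x \<in> negative_cone A \<Longrightarrow> c \<bullet> x \<le> - \<epsilon> * (\<Sum>k\<in>UNIV. \<bar>x$k\<bar>)"
    using inner_le_neg_l1_norm_on_negative_cone[OF assms] by blast
  have "(\<integral>\<^sup>+ x. ennreal (exp (c \<bullet> x)) * indicator (negative_cone A) x \<partial>lborel)
       \<le> (\<integral>\<^sup>+ x. ennreal (exp (-\<epsilon> * (\<Sum>k\<in>UNIV. \<bar>x$k\<bar>))) \<partial>(lborel::(real^'n) measure))"
    by (intro nn_integral_mono) (auto split: split_indicator dest!: bound)
  also have "\<dots> < \<infinity>" by (rule nn_integral_exp_neg_l1_norm_finite[OF \<open>\<epsilon> > 0\<close>])
  finally show ?thesis .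
qed


lemma emeasure_lborel_UN_disjoint_balls:
  fixes a :: "nat \<Rightarrow> 'a::euclidean_space"
  assumes "disjoint_family (\<lambda>m. ball (a m) r)" and "r > 0"
  shows "emeasure lborel (\<Union>m. ball (a m) r) = \<infinity>"
proof -
  have "emeasure lborel (\<Union>m. ball (a m) r) = (\<Sum>m. emeasure lborel (ball (a m) r))"
    using assms(1) by (intro suminf_emeasure[symmetric]) auto
  also have "\<dots> = (\<Sum>m::nat. ennreal (unit_ball_vol DIM('a) * r ^ DIM('a)))"
    using \<open>r > 0\<close> by (simp add: emeasure_ball)
  also have "\<dots> = top"
  proof (intro summable_iff_suminf_neq_top)
    have "unit_ball_vol (real DIM('a)) \<noteq> 0"
      using unit_ball_vol_pos[of "real DIM('a)"] by linarith
    then show "\<not> summable (\<lambda>m::nat. unit_ball_vol DIM('a) * r ^ DIM('a))"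
      using \<open>r > 0\<close> by (simp add: summable_const_iff)
  qed (use \<open>r > 0\<close> in simp)
  finally show ?thesis by simp
qed

lemma negative_cone_disjoint_balls_along_edge:
  fixes A :: "real^'n^'n"
  assumes "invertible A"
  obtains a r where "r > 0" "disjoint_family (\<lambda>m::nat. ball (a m) r)"
    "\<And>m z. z \<in> ball (a m) r \<Longrightarrow> (A *v z)$j < 0 \<and> (\<forall>i. i \<noteq> j \<longrightarrow> -1 < (A *v z)$i \<and> (A *v z)$i < 0)"
proof -
  define M where "M = matrix_inv A"
  have AM: "A ** M = mat 1" unfolding M_def by (rule matrix_inv_right[OF assms])
  define W where "W = (\<Inter>i. {x::real^'n. -1 < (A *v x)$i} \<inter> {x. (A *v x)$i < 0})"
  have "open W" unfolding W_def
    by (auto intro!: open_INT open_Int open_Collect_less continuous_intros)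
  moreover have "M *v (\<chi> i. -1/2) \<in> W"
    by (simp add: W_def matrix_vector_mul_assoc AM)
  ultimately obtain r where "r > 0" and r: "ball (M *v (\<chi> i. -1/2)) r \<subseteq> W"
    using open_contains_ball by blast
  \<comment> \<open>Translates of this ball by \<open>M (-m e\<^sub>j)\<close> move \<open>m\<close> units along the \<open>j\<close>-th edge of the cone.\<close>
  define e :: "nat \<Rightarrow> real^'n" where "e m = (\<chi> i. if i = j then - real m else 0)" for m
  define a where "a m = M *v (\<chi> i. -1/2) + M *v e m" for m
  have in_ball: "(A *v z)$j < - real m \<and> - 1 - real m < (A *v z)$j
      \<and> (\<forall>i. i \<noteq> j \<longrightarrow> -1 < (A *v z)$i \<and> (A *v z)$i < 0)"
    if "z \<in> ball (a m) r" for z m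
  proof -
    have "z - M *v e m \<in> W"
      using that r by (auto simp: a_def dist_norm algebra_simps)
    moreover have "A *v (z - M *v e m) = A *v z - e m"
      by (simp add: matrix_vector_mult_diff_distrib matrix_vector_mul_assoc AM)
    ultimately show ?thesis by (auto simp: W_def e_def split: if_splits)
  qed
  show thesis
  proof (rule that[OF \<open>r > 0\<close>])
    show "disjoint_family (\<lambda>m. ball (a m) r)"
      unfolding disjoint_family_on_def
    proof (intro ballI impI equals0I)
      fix m m' :: nat and z
      assume "m \<noteq> m'" and "z \<in> ball (a m) r \<inter> ball (a m') r"
      then have "z \<in> ball (a m) r" "z \<in> ball (a m') r" by auto
      from in_ball[OF this(1)] in_ball[OF this(2)] \<open>m \<noteq> m'\<close> show False by linarith
    qed
  qed (use in_ball in force)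
qed

lemma inner_ge_near_edge_of_negative_cone:
  fixes A :: "real^'n^'n" and c z :: "real^'n"
  assumes "invertible A" and "(c v* matrix_inv A)$j \<le> 0"
    and "(A *v z)$j < 0" and "\<And>i. i \<noteq> j \<Longrightarrow> \<bar>(A *v z)$i\<bar> \<le> 1"
  shows "- (\<Sum>i\<in>UNIV. \<bar>(c v* matrix_inv A)$i\<bar>) \<le> c \<bullet> z"
proof -
  define d where "d = c v* matrix_inv A"
  have "- \<bar>d$i\<bar> \<le> d$i * (A *v z)$i" for i
  proof (cases "i = j")
    case True
    then have "0 \<le> d$i * (A *v z)$i"
      using assms(2,3) by (simp add: d_def mult_nonpos_nonpos)
    then show ?thesis by linarith
  next
    case False
    then have "\<bar>d$i * (A *v z)$i\<bar> \<le> \<bar>d$i\<bar>"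
      using assms(4) by (simp add: abs_mult mult_left_le)
    then show ?thesis by linarith
  qed
  then have "(\<Sum>i\<in>UNIV. - \<bar>d$i\<bar>) \<le> (\<Sum>i\<in>UNIV. d$i * (A *v z)$i)"
    by (rule sum_mono)
  also have "\<dots> = c \<bullet> z"
    unfolding d_def
    by (subst inner_eq_inner_vector_matrix_mult[OF matrix_inv_left[OF assms(1)], of c z])
       (simp add: inner_vec_def)
  finally show ?thesis by (simp add: d_def sum_negf)
qed

lemma nn_integral_exp_inner_negative_cone_infinite:
  fixes A :: "real^'n^'n" and c :: "real^'n"
  assumes "invertible A" and "(c v* matrix_inv A)$j \<le> 0"
  shows "(\<integral>\<^sup>+ x. ennreal (exp (c \<bullet> x)) * indicator (negative_cone A) x \<partial>lborel) = \<infinity>"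
proof -
  define d where "d = c v* matrix_inv A"
  obtain r a where "r > 0" and disj: "disjoint_family (\<lambda>m::nat. ball (a m) r)"
    and in_ball: "\<And>m z. z \<in> ball (a m) r \<Longrightarrow>
      (A *v z)$j < 0 \<and> (\<forall>i. i \<noteq> j \<longrightarrow> -1 < (A *v z)$i \<and> (A *v z)$i < 0)"
    by (rule negative_cone_disjoint_balls_along_edge[OF assms(1), where j=j]) (rule that)
  define U where "U = (\<Union>m. ball (a m) r)"
  have U_cone: "U \<subseteq> negative_cone A"
  proof
    fix z assume "z \<in> U"
    then obtain m where "z \<in> ball (a m) r" by (auto simp: U_def)
    then have "(A *v z)$i < 0" for i
      using in_ball by (cases "i = j") auto
    then show "z \<in> negative_cone A" by (simp add: negative_cone_def)
  qed
  have U_lower: "- (\<Sum>i\<in>UNIV. \<bar>d$i\<bar>) \<le> c \<bullet> z" if "z \<in> U" for z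
  proof -
    obtain m where m: "z \<in> ball (a m) r" using \<open>z \<in> U\<close> by (auto simp: U_def)
    show ?thesis
      unfolding d_def
      by (intro inner_ge_near_edge_of_negative_cone[OF assms])
         (use in_ball[OF m] in \<open>auto simp: abs_le_iff\<close>)
  qed
  have "\<infinity> = ennreal (exp (- (\<Sum>i\<in>UNIV. \<bar>d$i\<bar>))) * emeasure lborel U"
    using emeasure_lborel_UN_disjoint_balls[OF disj \<open>r > 0\<close>] by (simp add: U_def ennreal_mult_top)
  also have "\<dots> = (\<integral>\<^sup>+ x. ennreal (exp (- (\<Sum>i\<in>UNIV. \<bar>d$i\<bar>))) * indicator U x \<partial>lborel)"
    by (rule nn_integral_cmult_indicator[symmetric]) (auto simp: U_def)
  also have "\<dots> \<le> (\<integral>\<^sup>+ x. ennreal (exp (c \<bullet> x)) * indicator (negative_cone A) x \<partial>lborel)"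
    using U_cone U_lower by (intro nn_integral_mono) (auto split: split_indicator intro!: ennreal_leI)
  finally show ?thesis by (simp add: top_unique)
qed

lemma nn_integral_exp_inner_negative_cone_finite_iff:
  fixes A :: "real^'n^'n" and c :: "real^'n"
  assumes "invertible A"
  shows "(\<integral>\<^sup>+ x. ennreal (exp (c \<bullet> x)) * indicator (negative_cone A) x \<partial>lborel) < \<infinity>
    \<longleftrightarrow> (\<forall>j. (c v* matrix_inv A)$j > 0)"
  using nn_integral_exp_inner_negative_cone_finite[OF assms]
    nn_integral_exp_inner_negative_cone_infinite[OF assms]
  by (metis not_less infinity_ennreal_def less_irrefl)

subsection \<open>Adjugates\<close>

lemma det_map_matrix_of_int:
  fixes B :: "int^'n^'n"
  shows "det (map_matrix of_int B :: 'a::comm_ring_1^'n^'n) = of_int (det B)"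
  by (simp add: det_def of_int_sum of_int_prod)

lemma adjugate_map_matrix_of_int:
  fixes B :: "int^'n^'n"
  shows "adjugate (map_matrix of_int B :: 'a::comm_ring_1^'n^'n) = map_matrix of_int (adjugate B)"
proof -
  have row_replaced: "(\<chi> k. if k = j then axis i 1 else map_matrix of_int B $ k)
      = (map_matrix of_int (\<chi> k. if k = j then axis i 1 else B $ k) :: 'a^'n^'n)" for i j
    by (auto simp: vec_eq_iff axis_def)
  show ?thesis
    by (simp add: vec_eq_iff adjugate_def det_map_matrix_of_int row_replaced)
qed

lemma adjugate_eq_det_mult_matrix_inv:
  fixes A :: "'a::field^'n^'n"
  assumes "invertible A"
  shows "adjugate A $ i $ j = det A * matrix_inv A $ i $ j"
proof -
  let ?M = "matrix_inv A"
  \<comment> \<open>\<open>e\<^sub>i = \<Sum>\<^sub>l ?M$i$l \<cdot> row l A\<close>, so replacing row \<open>j\<close> of \<open>A\<close> by \<open>e\<^sub>i\<close> scales \<open>det A\<close> by \<open>?M$i$j\<close>.\<close>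
  have "(\<Sum>l\<in>UNIV. (row i ?M)$l *s row l A) = (?M ** A) $ i"
    by (simp add: vec_eq_iff row_def matrix_matrix_mult_def sum_component)
  also have "\<dots> = axis i 1"
    using matrix_inv_left[OF assms] by (simp add: mat_def axis_def vec_eq_iff)
  finally have "(\<chi> k. if k = j then axis i 1 else A $ k)
      = (\<chi> k. if k = j then (\<Sum>l\<in>UNIV. (row i ?M)$l *s row l A) else row k A)"
    by (auto simp: vec_eq_iff row_def)
  then show ?thesis
    by (simp add: adjugate_def cramer_lemma_transpose row_def)
qed

subsection \<open>Monomials on monomial polyhedra\<close>

lemma prod_norm_powi_eq_exp_inner:
  fixes z :: "complex^'n" and b :: "int^'n"
  assumes "\<forall>k. z$k \<noteq> 0"
  shows "(\<Prod>k\<in>UNIV. norm (z$k) powi (b$k)) = exp ((\<chi> k. real_of_int (b$k)) \<bullet> log_modulus z)"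
proof -
  have "norm (z$k) powi (b$k) = exp (real_of_int (b$k) * ln (norm (z$k)))" for k
    using assms powr_real_of_int'[of "norm (z$k)" "b$k"] by (simp add: powr_def)
  then show ?thesis
    by (simp add: exp_sum inner_vec_def log_modulus_def)
qed

lemma norm_monomial_eq_exp_inner:
  assumes "\<forall>k. z$k \<noteq> 0"
  shows "norm (monomial \<beta> z) = exp ((\<chi> k. real_of_int (\<beta>$k)) \<bullet> log_modulus z)"
  using prod_norm_powi_eq_exp_inner[OF assms]
  by (simp add: monomial_def prod_norm[symmetric] norm_power_int)

lemma mem_monomial_polyhedron_iff_log_modulus:
  fixes B :: "int^'n^'n"
  assumes "\<forall>k. z$k \<noteq> 0"
  shows "z \<in> monomial_polyhedron B \<longleftrightarrow> log_modulus z \<in> negative_cone (map_matrix real_of_int B)"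
proof -
  have "(\<Prod>k\<in>UNIV. norm (z$k) powi (B$j$k)) = exp ((map_matrix real_of_int B *v log_modulus z)$j)" for j
    using prod_norm_powi_eq_exp_inner[OF assms, of "B$j"]
    by (simp add: matrix_vector_mult_def inner_vec_def)
  then show ?thesis
    using assms by (simp add: monomial_polyhedron_def negative_cone_def)
qed

lemma nn_integral_monomial_polyhedron_eq_cone:
  fixes B :: "int^'n^'n" and \<beta> :: "int^'n" and p :: real
  shows "(\<integral>\<^sup>+ z \<in> monomial_polyhedron B. ennreal (norm (monomial \<beta> z) powr p) \<partial>lborel)
    = ennreal ((2*pi)^CARD('n)) * (\<integral>\<^sup>+ x. ennreal (exp ((\<chi> k. p * real_of_int (\<beta>$k) + 2) \<bullet> x))
        * indicator (negative_cone (map_matrix real_of_int B)) x \<partial>lborel)"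
proof -
  define K where "K = negative_cone (map_matrix real_of_int B)"
  define b :: "real^'n" where "b = (\<chi> k. real_of_int (\<beta>$k))"
  define G where "G x = ennreal (exp (p * (b \<bullet> x))) * indicator K x" for x :: "real^'n"
  have [measurable]: "K \<in> sets borel" by (simp add: K_def)
  have "(\<integral>\<^sup>+ z \<in> monomial_polyhedron B. ennreal (norm (monomial \<beta> z) powr p) \<partial>lborel)
      = (\<integral>\<^sup>+ z. G (log_modulus z) \<partial>lborel)"
    using AE_lborel_vec_nth_neq[of "\<lambda>_. 0"]
    by (intro nn_integral_cong_AE, eventually_elim)
       (simp add: G_def K_def b_def norm_monomial_eq_exp_inner mem_monomial_polyhedron_iff_log_modulus
         exp_powr_real split: split_indicator)
  also have "\<dots> = (\<integral>\<^sup>+ x. G x \<partial>distr lborel borel log_modulus)"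
    by (rule nn_integral_distr[symmetric]) (auto simp: G_def)
  also have "\<dots> = (\<integral>\<^sup>+ x. log_modulus_density x * G x \<partial>lborel)"
    by (simp add: distr_log_modulus nn_integral_density G_def)
  also have "\<dots> = (\<integral>\<^sup>+ x. ennreal ((2*pi)^CARD('n))
      * (ennreal (exp ((\<chi> k. p * real_of_int (\<beta>$k) + 2) \<bullet> x)) * indicator K x) \<partial>lborel)"
  proof (rule nn_integral_cong)
    fix x :: "real^'n"
    have "(\<chi> k. p * real_of_int (\<beta>$k) + 2) \<bullet> x = p * (b \<bullet> x) + (\<Sum>k\<in>UNIV. 2 * x$k)"
      by (simp add: b_def inner_vec_def algebra_simps sum.distrib sum_distrib_left)
    then show "log_modulus_density x * G x = ennreal ((2*pi)^CARD('n))
        * (ennreal (exp ((\<chi> k. p * real_of_int (\<beta>$k) + 2) \<bullet> x)) * indicator K x)"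
      by (simp add: log_modulus_density_eq G_def exp_add ennreal_mult' mult_ac)
  qed
  also have "\<dots> = ennreal ((2*pi)^CARD('n)) * (\<integral>\<^sup>+ x. ennreal (exp ((\<chi> k. p * real_of_int (\<beta>$k) + 2) \<bullet> x))
        * indicator K x \<partial>lborel)"
    by (rule nn_integral_cmult) measurable
  finally show ?thesis by (simp add: K_def)
qed

theorem proposition5p5:
  fixes B :: "int^'n^'n" and \<beta> :: "int^'n" and p :: real
  assumes "bounded (monomial_polyhedron B)"
    and "det B > 0"
    and "\<forall>i j. matrix_inv (map_matrix real_of_int B) $ i $ j \<ge> 0"
    and "p > 0"
  shows "((\<integral>\<^sup>+ z \<in> monomial_polyhedron B. ennreal (norm (monomial \<beta> z) powr p) \<partial>lborel) < \<infinity>)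
     \<longleftrightarrow> (\<forall>j. ((\<chi> k. p * real_of_int (\<beta> $ k) + 2) v* map_matrix real_of_int (adjugate B)) $ j > 0)"
proof -
  define Br where "Br = map_matrix real_of_int B"
  define c where "c = (\<chi> k. p * real_of_int (\<beta> $ k) + 2)"
  have det_pos: "det Br > 0" using assms(2) by (simp add: Br_def det_map_matrix_of_int)
  then have "invertible Br" by (simp add: invertible_det_nz)
  have "(c v* map_matrix real_of_int (adjugate B))$j = det Br * (c v* matrix_inv Br)$j" for j
    using adjugate_eq_det_mult_matrix_inv[OF \<open>invertible Br\<close>]
    by (simp add: Br_def adjugate_map_matrix_of_int[symmetric] vector_matrix_mult_def
        sum_distrib_left mult_ac)
  then have "(\<forall>j. (c v* matrix_inv Br)$j > 0) \<longleftrightarrow> (\<forall>j. (c v* map_matrix real_of_int (adjugate B))$j > 0)"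
    using det_pos by (simp add: zero_less_mult_iff)
  moreover have "((\<integral>\<^sup>+ z \<in> monomial_polyhedron B. ennreal (norm (monomial \<beta> z) powr p) \<partial>lborel) < \<infinity>)
      \<longleftrightarrow> (\<integral>\<^sup>+ x. ennreal (exp (c \<bullet> x)) * indicator (negative_cone Br) x \<partial>lborel) < \<infinity>"
    by (auto simp: nn_integral_monomial_polyhedron_eq_cone ennreal_mult_less_top Br_def c_def)
  ultimately show ?thesis
    using nn_integral_exp_inner_negative_cone_finite_iff[OF \<open>invertible Br\<close>, of c]
    by (simp add: c_def)
qed

end
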